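(* Consider the memoryless $K$-user channel $$Y_k=X_k\exp\!\Big(i\sum_{\ell=1}^K h_{k\ell}|X_\ell|^2\Big)+Z_k,\qquad k=1,\dots,K,$$ where $Z_1,\dots,Z_K$ are independent circularly-symmetric complex Gaussian with variance $N$, independent of the inputs, the $h_{kk}$ are real, and the cross coefficients $h_{k\ell}$, $k\neq\ell$, are rational numbers. For each $\ell$ let $q_\ell>0$ be such that $h_{k\ell}q_\ell\in\mathbb{Z}$ for all $k\neq\ell$. Then there exist independent input distributions with $|X_\ell|^2\in\{2\pi q_\ell m: m=1,2,\dots\}$ almost surely and $\mathbb{E}|X_\ell|^2\le P^{(\ell)}$, such that for every $k$ the rate $R_k=I(X_k;Y_k)$ satisfies $\liminf R_k/\log(P^{(k)}/N)\ge 1$ as $P^{(1)}/N,\dots,P^{(K)}/N\to\infty$; i.e. each user achieves pre-log $1$.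
   Context: Pre-log of user $k$: $r_k=\lim_{P^{(1)}/N,\dots,P^{(K)}/N\to\infty} R_k/\log(P^{(k)}/N)$, where $R_k$ is the information rate of user $k$ under average power constraints $\frac1n\sum_{j=1}^n\mathbb{E}|X_{k,j}|^2\le P^{(k)}$. Inputs are used i.i.d. over time. *)

theory Defs
  imports "HOL-Probability.Probability"
begin

text \<open>Density (w.r.t. Lebesgue measure on the complex plane) of a circularly-symmetric
complex Gaussian with variance N, i.e. E|Z|^2 = N.\<close>
definition cscg_density :: "real \<Rightarrow> complex \<Rightarrow> real" where
  "cscg_density N z = exp (- (cmod z)\<^sup>2 / N) / (pi * N)"

text \<open>Filter on power vectors (indexed by users 0..K-1): all powers P l, l < K, tend to
infinity jointly.  (With N > 0 fixed, this is the same as all P l / N tending to infinity.)\<close>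
definition powers_to_infty :: "nat \<Rightarrow> (nat \<Rightarrow> real) filter" where
  "powers_to_infty K = (INF B. principal {P. \<forall>l<K. B \<le> P l})"

definition admissible_input :: "real \<Rightarrow> real \<Rightarrow> complex measure \<Rightarrow> bool" where
  "admissible_input q p \<mu> \<longleftrightarrow>
     prob_space \<mu> \<and> sets \<mu> = sets borel \<and>
     (AE x in \<mu>. \<exists>m::nat. m \<ge> 1 \<and> (cmod x)\<^sup>2 = 2 * pi * q * real m) \<and>
     (\<integral>\<^sup>+ x. ennreal ((cmod x)\<^sup>2) \<partial>\<mu>) \<le> ennreal p"

definition channel_out ::
  "nat \<Rightarrow> (nat \<Rightarrow> nat \<Rightarrow> real) \<Rightarrow> (nat \<Rightarrow> 'a \<Rightarrow> complex) \<Rightarrow> (nat \<Rightarrow> 'a \<Rightarrow> complex)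
    \<Rightarrow> nat \<Rightarrow> 'a \<Rightarrow> complex" where
  "channel_out K h X Z k \<omega> =
     X k \<omega> * cis (\<Sum>l<K. h k l * (cmod (X l \<omega>))\<^sup>2) + Z k \<omega>"

definition channel_setup ::
  "'a measure \<Rightarrow> nat \<Rightarrow> real \<Rightarrow> (nat \<Rightarrow> real \<Rightarrow> complex measure) \<Rightarrow> (nat \<Rightarrow> real)
    \<Rightarrow> (nat \<Rightarrow> 'a \<Rightarrow> complex) \<Rightarrow> (nat \<Rightarrow> 'a \<Rightarrow> complex) \<Rightarrow> bool" where
  "channel_setup M K N \<mu> P X Z \<longleftrightarrow>
     prob_space M \<and>
     (\<forall>l<K. X l \<in> borel_measurable M \<and> distr M borel (X l) = \<mu> l (P l)) \<and>
     (\<forall>k<K. distributed M lborel (Z k) (\<lambda>z. ennreal (cscg_density N z))) \<and>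
     prob_space.indep_vars M (\<lambda>_. borel)
        (\<lambda>i. case i of Inl l \<Rightarrow> X l | Inr k \<Rightarrow> Z k) ({..<K} <+> {..<K})"

end

theory Submission
  imports Defs "HOL-Real_Asymp.Real_Asymp"
begin

text \<open>
  For input power p user l sends a point chosen uniformly from J^2 points x = r j e^{i t/J},
  with rings j in [J, 2J), phases t < J, ring gap r = sqrt(2 pi q_l s(p)), s(p) = ceil(ln p) + 1
  and J about sqrt p / (2 r).  Then |x|^2 = 2 pi q_l s(p) j^2 is a positive multiple of
  2 pi q_l, so every cross term h_kl |X_l|^2 (k \<noteq> l) is a multiple of 2 pi and the phase of user k
  depends on |X_k|^2 only: user k sees the single-user channel Y = X e^{i h |X|^2} + Z.
  The map x \<mapsto> x e^{i h |x|^2} keeps the constellation r/2-separated, and r grows like sqrt(ln p),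
  so the noise is eventually smaller than r/4 with high probability.  A change-of-measure lower
  bound on relative entropy turns this decodability into I(X;Y) \<ge> (1 - e) ln |S| - O(1), and
  ln |S| = ln p - O(ln ln p).
\<close>


section \<open>A lower bound on relative entropy\<close>

lemma xlnx_tangent:
  fixes t a :: real
  assumes "0 \<le> t" "0 < a"
  shows "t * ln a + t - a \<le> t * ln t"
proof (cases "t = 0")
  case True
  then show ?thesis using assms by simp
next
  case False
  then have t: "t > 0" using assms by simp
  have "t * ln (a / t) \<le> t * (a / t - 1)"
    using ln_le_minus_one[of "a / t"] t assms by (intro mult_left_mono) auto
  also have "\<dots> = a - t" using t by (simp add: field_simps)
  finally show ?thesis using t assms by (simp add: ln_div algebra_simps)
qed

lemma AE_density_le_const:
  assumes P: "finite_measure P" and g[measurable]: "g \<in> borel_measurable P"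
    and dom: "\<And>E. E \<in> sets P \<Longrightarrow> emeasure (density P g) E \<le> ennreal c * emeasure P E"
  shows "AE x in P. g x \<le> ennreal c"
proof (rule ccontr)
  interpret P: finite_measure P by fact
  assume nAE: "\<not> (AE x in P. g x \<le> ennreal c)"
  define B where "B = {x \<in> space P. ennreal c < g x}"
  have [measurable]: "B \<in> sets P" unfolding B_def by measurable
  have "(\<integral>\<^sup>+x. ennreal c * indicator B x \<partial>P) < (\<integral>\<^sup>+x. g x * indicator B x \<partial>P)"
  proof (rule nn_integral_less)
    show "(\<integral>\<^sup>+x. ennreal c * indicator B x \<partial>P) \<noteq> \<infinity>"
      by (simp add: nn_integral_cmult_indicator P.emeasure_eq_measure ennreal_mult_eq_top_iff)
    show "AE x in P. ennreal c * indicator B x \<le> g x * indicator B x"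
      by (auto simp: B_def indicator_def less_imp_le)
    show "\<not> (AE x in P. g x * indicator B x \<le> ennreal c * indicator B x)"
    proof
      assume "AE x in P. g x * indicator B x \<le> ennreal c * indicator B x"
      then have "AE x in P. g x \<le> ennreal c"
        using AE_space
      proof eventually_elim
        case (elim x)
        then show ?case by (cases "ennreal c < g x") (auto simp: B_def indicator_def)
      qed
      with nAE show False by simp
    qed
  qed simp_all
  also have "(\<integral>\<^sup>+x. g x * indicator B x \<partial>P) = emeasure (density P g) B"
    by (simp add: emeasure_density)
  also have "\<dots> \<le> ennreal c * emeasure P B" by (simp add: dom)
  also have "\<dots> = (\<integral>\<^sup>+x. ennreal c * indicator B x \<partial>P)"
    by (simp add: nn_integral_cmult_indicator)
  finally show False by simp
qed

lemma bounded_density_exists: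
  assumes P: "prob_space P" and sets: "sets Q = sets P" and c: "0 \<le> c"
    and dom: "\<And>E. E \<in> sets P \<Longrightarrow> emeasure Q E \<le> ennreal c * emeasure P E"
  obtains f where "f \<in> borel_measurable P" "\<And>x. 0 \<le> f x" "AE x in P. f x \<le> c"
    "density P (\<lambda>x. ennreal (f x)) = Q"
proof -
  interpret P: prob_space P by fact
  have "absolutely_continuous P Q"
    unfolding absolutely_continuous_def
  proof
    fix E assume "E \<in> null_sets P"
    then have E: "E \<in> sets P" "emeasure P E = 0" by auto
    then have "emeasure Q E \<le> 0" using dom[of E] by simp
    then show "E \<in> null_sets Q" using E sets by auto
  qed
  then have dens: "density P (RN_deriv P Q) = Q"
    using P.density_RN_deriv sets by blast
  have bound: "AE x in P. RN_deriv P Q x \<le> ennreal c"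
    using dom by (intro AE_density_le_const) (simp_all add: dens P.finite_measure_axioms)
  define f where "f x = enn2real (RN_deriv P Q x)" for x
  have f_meas[measurable]: "f \<in> borel_measurable P" unfolding f_def by measurable
  have fin: "AE x in P. RN_deriv P Q x = ennreal (f x)"
    using bound by eventually_elim (auto simp: f_def ennreal_enn2real_if top_unique)
  show thesis
  proof
    show "f \<in> borel_measurable P" "\<And>x. 0 \<le> f x" by (simp_all add: f_def)
    show "AE x in P. f x \<le> c"
      using bound fin by eventually_elim (use c in auto)
    have "density P (RN_deriv P Q) = density P (\<lambda>x. ennreal (f x))"
      by (rule density_cong[OF _ _ fin]; measurable)
    then show "density P (\<lambda>x. ennreal (f x)) = Q" using dens by simp
  qed
qed

lemma integrable_xlogx_bounded:
  fixes f :: "'b \<Rightarrow> real"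
  assumes P: "finite_measure P" and f[measurable]: "f \<in> borel_measurable P"
    and f0: "\<And>x. 0 \<le> f x" and fc: "AE x in P. f x \<le> c"
  shows "integrable P (\<lambda>x. f x * log b (f x))"
proof (rule finite_measure.integrable_const_bound[OF P, where B="(c * c + 1) / \<bar>ln b\<bar>"])
  show "AE x in P. norm (f x * log b (f x)) \<le> (c * c + 1) / \<bar>ln b\<bar>"
    using fc
  proof eventually_elim
    fix x assume fx: "f x \<le> c"
    have "f x - 1 \<le> f x * ln (f x)" using xlnx_tangent[OF f0, of 1] by simp
    moreover have "f x * ln (f x) \<le> f x * f x - f x"
    proof (cases "f x = 0")
      case False
      then have "f x * ln (f x) \<le> f x * (f x - 1)"
        using ln_le_minus_one[of "f x"] f0[of x] by (intro mult_left_mono) auto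
      then show ?thesis by (simp add: algebra_simps)
    qed simp
    moreover have "f x * f x \<le> c * c" using fx f0[of x] by (simp add: mult_mono)
    moreover have "0 \<le> c * c" by simp
    ultimately have "\<bar>f x * ln (f x)\<bar> \<le> c * c + 1"
      using f0[of x] by (simp only: abs_le_iff) linarith
    then show "norm (f x * log b (f x)) \<le> (c * c + 1) / \<bar>ln b\<bar>"
      unfolding log_def by (simp add: abs_divide divide_right_mono)
  qed
qed simp

text \<open>
  It follows by
  integrating the tangent inequality with slope ln a on A and slope 0 off A.
\<close>
lemma KL_divergence_lower_bound:
  fixes P Q :: "'b measure" and c a b :: real and A :: "'b set"
  assumes P: "prob_space P" and sets: "sets Q = sets P"
    and dom: "\<And>E. E \<in> sets P \<Longrightarrow> emeasure Q E \<le> ennreal c * emeasure P E"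
    and A: "A \<in> sets P" and a: "a > 0" and c: "c \<ge> 0" and b: "b > 1"
  shows "(measure Q A * (ln a + 1) - a * measure P A - 1) / ln b \<le> KL_divergence b P Q"
proof -
  interpret P: prob_space P by fact
  obtain f where f[measurable]: "f \<in> borel_measurable P" and f0: "\<And>x. 0 \<le> f x"
    and fc: "AE x in P. f x \<le> c" and Qf: "density P (\<lambda>x. ennreal (f x)) = Q"
    using bounded_density_exists[OF P sets c dom] by blast
  have lnb: "ln b > 0" using b by simp
  have KL: "KL_divergence b P Q = (\<integral>x. f x * log b (f x) \<partial>P)"
    using P.KL_density[OF b f] f0 Qf by simp
  define h where "h x = ((ln a + 1) * (f x * indicator A x) - a * indicator A x - 1) / ln b" for x
  have pointwise: "h x \<le> f x * log b (f x)" for x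
  proof -
    have "f x * ln a + f x - a \<le> f x * ln (f x)" by (rule xlnx_tangent[OF f0 a])
    moreover have "f x - 1 \<le> f x * ln (f x)" using xlnx_tangent[OF f0, of 1] by simp
    ultimately have "(ln a + 1) * (f x * indicator A x) - a * indicator A x - 1 \<le> f x * ln (f x)"
      using a f0[of x] by (auto simp: indicator_def algebra_simps)
    then show ?thesis unfolding h_def log_def using lnb by (simp add: divide_right_mono)
  qed
  have int_xlogx: "integrable P (\<lambda>x. f x * log b (f x))"
    by (rule integrable_xlogx_bounded[OF P.finite_measure_axioms f f0 fc])
  have int_f: "integrable P f"
    by (rule P.integrable_const_bound[where B=c]) (use fc f0 in auto)
  have int_fA: "integrable P (\<lambda>x. f x * indicator A x)"
    using integrable_mult_indicator[OF A int_f] by (simp add: mult.commute)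
  have int_A: "integrable P (\<lambda>x. indicator A x :: real)"
    using A by (intro P.integrable_const_bound[where B=1]) (auto simp: indicator_def)
  have QA: "(\<integral>x. f x * indicator A x \<partial>P) = measure Q A"
  proof -
    have "(\<integral>x. (indicator A x :: real) \<partial>density P (\<lambda>x. ennreal (f x)))
        = (\<integral>x. f x *\<^sub>R (indicator A x :: real) \<partial>P)"
      by (subst integral_density) (use A f0 in auto)
    then show ?thesis using Qf A sets by simp
  qed
  have "(\<integral>x. h x \<partial>P) \<le> (\<integral>x. f x * log b (f x) \<partial>P)"
    by (rule integral_mono[OF _ int_xlogx pointwise]) (simp add: h_def int_fA int_A)
  moreover have "(\<integral>x. h x \<partial>P) = (measure Q A * (ln a + 1) - a * measure P A - 1) / ln b"
    unfolding h_def using int_fA int_A A QA by (simp add: algebra_simps P.prob_space)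
  ultimately show ?thesis using KL by simp
qed


section \<open>Mutual information of a uniform decodable code\<close>

definition uniform_law :: "'b::topological_space set \<Rightarrow> 'b measure" where
  "uniform_law S = distr (measure_pmf (pmf_of_set S)) borel id"

lemma prob_space_uniform_law: "prob_space (uniform_law S)"
  unfolding uniform_law_def
  by (intro prob_space.prob_space_distr) (auto simp: measure_pmf.prob_space_axioms)

lemma sets_uniform_law [simp]: "sets (uniform_law S) = sets borel"
  by (simp add: uniform_law_def)

lemma uniform_law_AE_mem:
  fixes S :: "'b::t1_space set"
  assumes "finite S" "S \<noteq> {}"
  shows "AE x in uniform_law S. x \<in> S"
proof (rule AE_I')
  have cS: "- S \<in> sets borel" using assms by (intro borel_open open_Compl finite_imp_closed)
  have "emeasure (uniform_law S) (- S) = 0" unfolding uniform_law_def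
    by (subst emeasure_distr) (use cS assms in \<open>auto simp: emeasure_pmf_of_set\<close>)
  then show "- S \<in> null_sets (uniform_law S)" using cS by (auto simp: uniform_law_def)
qed (auto simp: uniform_law_def)

lemma AE_mem_of_uniform_law:
  fixes X :: "'a \<Rightarrow> 'b::t1_space"
  assumes X: "X \<in> borel_measurable M" and dX: "distr M borel X = uniform_law S"
    and S: "finite S" "S \<noteq> {}"
  shows "AE \<omega> in M. X \<omega> \<in> S"
proof -
  have "AE x in distr M borel X. x \<in> S" unfolding dX by (rule uniform_law_AE_mem[OF S])
  then show ?thesis by (rule AE_distrD[OF X])
qed

lemma emeasure_uniform_law_pair:
  fixes S :: "'b::topological_space set" and \<nu> :: "'c::topological_space measure"
  assumes S: "finite S" "S \<noteq> {}" and nu: "prob_space \<nu>" "sets \<nu> = sets borel"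
    and E: "E \<in> sets (borel \<Otimes>\<^sub>M borel)"
  shows "emeasure (uniform_law S \<Otimes>\<^sub>M \<nu>) E = (\<Sum>s\<in>S. emeasure \<nu> (Pair s -` E)) / of_nat (card S)"
proof -
  interpret nu: prob_space \<nu> by fact
  have E': "E \<in> sets (uniform_law S \<Otimes>\<^sub>M \<nu>)"
    using E by (subst sets_pair_measure_cong[of _ borel _ borel]) (simp_all add: nu)
  have "emeasure (uniform_law S \<Otimes>\<^sub>M \<nu>) E = (\<integral>\<^sup>+x. emeasure \<nu> (Pair x -` E) \<partial>uniform_law S)"
    by (rule nu.emeasure_pair_measure_alt[OF E'])
  also have "\<dots> = (\<integral>\<^sup>+x. emeasure \<nu> (Pair (id x) -` E) \<partial>measure_pmf (pmf_of_set S))"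
    unfolding uniform_law_def
    using nu.measurable_emeasure_Pair[OF E'] by (intro nn_integral_distr) (simp_all add: uniform_law_def)
  also have "\<dots> = (\<Sum>s\<in>S. emeasure \<nu> (Pair s -` E)) / of_nat (card S)"
    using S by (simp add: nn_integral_pmf_of_set)
  finally show ?thesis .
qed

text \<open>
  If X is uniform on a finite set S, the joint law of (X, Y) is at most |S| times the product
  of the marginals: P(X = s, Y \<in> B) \<le> P(Y \<in> B) = |S| P(X = s) P(Y \<in> B).
\<close>
lemma joint_law_le_card_product:
  fixes X :: "'a \<Rightarrow> 'b::t1_space" and Y :: "'a \<Rightarrow> 'c::topological_space"
  assumes M: "prob_space M" and [measurable]: "X \<in> borel_measurable M" "Y \<in> borel_measurable M"
    and S: "finite S" "S \<noteq> {}" and dX: "distr M borel X = uniform_law S"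
    and E: "E \<in> sets (borel \<Otimes>\<^sub>M borel)"
  shows "emeasure (distr M (borel \<Otimes>\<^sub>M borel) (\<lambda>\<omega>. (X \<omega>, Y \<omega>))) E
           \<le> ennreal (real (card S)) * emeasure (distr M borel X \<Otimes>\<^sub>M distr M borel Y) E"
proof -
  interpret M: prob_space M by fact
  let ?Y = "distr M borel Y"
  have XS: "AE \<omega> in M. X \<omega> \<in> S" by (rule AE_mem_of_uniform_law[OF _ dX S]) simp
  have sec[measurable]: "{\<omega>\<in>space M. (s, Y \<omega>) \<in> E} \<in> sets M" for s
    using E by measurable
  have "emeasure (distr M (borel \<Otimes>\<^sub>M borel) (\<lambda>\<omega>. (X \<omega>, Y \<omega>))) E
      = emeasure M {\<omega>\<in>space M. (X \<omega>, Y \<omega>) \<in> E}"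
    using E by (subst emeasure_distr) (auto simp: vimage_def Int_def conj_commute)
  also have "\<dots> \<le> emeasure M (\<Union>s\<in>S. {\<omega>\<in>space M. (s, Y \<omega>) \<in> E})"
    using XS S by (intro emeasure_mono_AE) (auto elim!: eventually_mono)
  also have "\<dots> \<le> (\<Sum>s\<in>S. emeasure M {\<omega>\<in>space M. (s, Y \<omega>) \<in> E})"
    using S by (intro emeasure_subadditive_finite) auto
  also have "\<dots> = (\<Sum>s\<in>S. emeasure ?Y (Pair s -` E))"
    using E by (auto intro!: sum.cong simp: emeasure_distr vimage_def Int_def conj_commute)
  also have "\<dots> = of_nat (card S) * ((\<Sum>s\<in>S. emeasure ?Y (Pair s -` E)) / of_nat (card S))"
    using S by (subst ennreal_times_divide, subst mult.commute, subst ennreal_mult_divide_eq)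
               (auto simp: card_gt_0_iff)
  also have "\<dots> = ennreal (real (card S)) * emeasure (distr M borel X \<Otimes>\<^sub>M ?Y) E"
    using emeasure_uniform_law_pair[OF S M.prob_space_distr _ E, of Y] dX
    by (simp add: ennreal_of_nat_eq_real_of_nat)
  finally show ?thesis .
qed

definition decoding_region :: "'b set \<Rightarrow> ('b \<Rightarrow> 'c::metric_space) \<Rightarrow> real \<Rightarrow> ('b \<times> 'c) set" where
  "decoding_region S g \<delta> = (\<Union>s\<in>S. {s} \<times> ball (g s) \<delta>)"

lemma decoding_region_sets:
  fixes S :: "'b::t1_space set" and g :: "'b \<Rightarrow> 'c::metric_space"
  assumes "finite S"
  shows "decoding_region S g \<delta> \<in> sets (borel \<Otimes>\<^sub>M borel)"
  unfolding decoding_region_def using assms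
  by (intro sets.finite_UN pair_measureI) (auto intro: closed_singleton)

text \<open>
  For a code whose images are 2\<delta>-separated, the balls of radius \<delta> are disjoint, so under the
  product of the uniform law with any law the decoding region has probability at most 1/|S|.
\<close>
lemma decoding_region_product_small:
  fixes S :: "'b::t1_space set" and g :: "'b \<Rightarrow> 'c::metric_space" and \<nu> :: "'c measure"
  assumes S: "finite S" "S \<noteq> {}" and nu: "prob_space \<nu>" "sets \<nu> = sets borel"
    and sep: "\<And>s s'. s \<in> S \<Longrightarrow> s' \<in> S \<Longrightarrow> s \<noteq> s' \<Longrightarrow> 2 * \<delta> \<le> dist (g s) (g s')"
  shows "real (card S) * measure (uniform_law S \<Otimes>\<^sub>M \<nu>) (decoding_region S g \<delta>) \<le> 1"
proof -
  have n0: "card S > 0" using S by (simp add: card_gt_0_iff)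
  have disj: "disjoint_family_on (\<lambda>s. ball (g s) \<delta>) S"
    unfolding disjoint_family_on_def
  proof (intro ballI impI equals0I)
    fix s s' z assume ss: "s \<in> S" "s' \<in> S" "s \<noteq> s'" and "z \<in> ball (g s) \<delta> \<inter> ball (g s') \<delta>"
    then have "dist (g s) (g s') < 2 * \<delta>"
      using dist_triangle3[of "g s" "g s'" z] by (simp add: dist_commute)
    with sep[OF ss] show False by simp
  qed
  have sec: "Pair s -` decoding_region S g \<delta> = ball (g s) \<delta>" if "s \<in> S" for s
    using that by (auto simp: decoding_region_def)
  have "(\<Sum>s\<in>S. emeasure \<nu> (Pair s -` decoding_region S g \<delta>)) = (\<Sum>s\<in>S. emeasure \<nu> (ball (g s) \<delta>))"
    by (rule sum.cong) (simp_all add: sec)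
  then have "emeasure (uniform_law S \<Otimes>\<^sub>M \<nu>) (decoding_region S g \<delta>)
      = (\<Sum>s\<in>S. emeasure \<nu> (ball (g s) \<delta>)) / of_nat (card S)"
    using emeasure_uniform_law_pair[OF S nu decoding_region_sets[OF S(1)]] by simp
  also have "(\<Sum>s\<in>S. emeasure \<nu> (ball (g s) \<delta>)) = emeasure \<nu> (\<Union>s\<in>S. ball (g s) \<delta>)"
    by (rule sum_emeasure[OF _ disj S(1)]) (use nu(2) in \<open>auto intro: borel_open\<close>)
  also have "\<dots> \<le> 1" by (rule prob_space.emeasure_le_1[OF nu(1)])
  finally have small: "emeasure (uniform_law S \<Otimes>\<^sub>M \<nu>) (decoding_region S g \<delta>) \<le> ennreal (1 / real (card S))"
    using n0 divide_ennreal[of 1 "real (card S)"]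
    by (simp add: divide_right_mono_ennreal ennreal_of_nat_eq_real_of_nat)
  interpret UP: prob_space "uniform_law S \<Otimes>\<^sub>M \<nu>"
    using prob_space_uniform_law nu by (intro prob_space_pair)
  from small have "measure (uniform_law S \<Otimes>\<^sub>M \<nu>) (decoding_region S g \<delta>) \<le> 1 / real (card S)"
    by (simp add: UP.emeasure_eq_measure)
  then show ?thesis using n0 by (simp add: field_simps)
qed

text \<open>
  This is the relative-entropy bound applied to the
  joint law and the product of marginals, with A the decoding region and a = |S|.
\<close>
lemma mutual_information_lower_bound:
  fixes X :: "'a \<Rightarrow> 'b::t1_space" and Y :: "'a \<Rightarrow> 'c::metric_space" and g :: "'b \<Rightarrow> 'c"
  assumes M: "prob_space M" and [measurable]: "X \<in> borel_measurable M" "Y \<in> borel_measurable M"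
    and S: "finite S" "S \<noteq> {}" and dX: "distr M borel X = uniform_law S"
    and sep: "\<And>s s'. s \<in> S \<Longrightarrow> s' \<in> S \<Longrightarrow> s \<noteq> s' \<Longrightarrow> 2 * \<delta> \<le> dist (g s) (g s')"
    and good: "1 - e \<le> measure M {\<omega>\<in>space M. X \<omega> \<in> S \<and> dist (g (X \<omega>)) (Y \<omega>) < \<delta>}"
    and e: "e \<le> 1"
  shows "((1 - e) * ln (card S) - 2) / ln 2 \<le> prob_space.mutual_information M 2 borel borel X Y"
proof -
  interpret M: prob_space M by fact
  let ?Y = "distr M borel Y" and ?A = "decoding_region S g \<delta>"
  define P where "P = distr M borel X \<Otimes>\<^sub>M ?Y"
  define Q where "Q = distr M (borel \<Otimes>\<^sub>M borel) (\<lambda>\<omega>. (X \<omega>, Y \<omega>))"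
  have n0: "card S > 0" using S by (simp add: card_gt_0_iff)
  have A: "?A \<in> sets (borel \<Otimes>\<^sub>M borel)" by (rule decoding_region_sets[OF S(1)])
  have setsP: "sets P = sets (borel \<Otimes>\<^sub>M borel)"
    unfolding P_def by (rule sets_pair_measure_cong) simp_all
  have pP: "prob_space P"
    unfolding P_def by (intro prob_space_pair M.prob_space_distr) simp_all
  have PA: "real (card S) * measure P ?A \<le> 1"
    unfolding P_def dX
    using decoding_region_product_small[OF S M.prob_space_distr _ sep] by simp
  have QA: "1 - e \<le> measure Q ?A"
  proof -
    have "measure Q ?A = measure M {\<omega>\<in>space M. (X \<omega>, Y \<omega>) \<in> ?A}"
      unfolding Q_def using A by (subst measure_distr) (auto simp: vimage_def Int_def conj_commute)
    also have "{\<omega>\<in>space M. (X \<omega>, Y \<omega>) \<in> ?A} = {\<omega>\<in>space M. X \<omega> \<in> S \<and> dist (g (X \<omega>)) (Y \<omega>) < \<delta>}"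
      by (auto simp: decoding_region_def)
    finally show ?thesis using good by simp
  qed
  have "(1 - e) * (ln (card S) + 1) \<le> measure Q ?A * (ln (card S) + 1)"
    using QA n0 by (intro mult_right_mono) auto
  then have "(1 - e) * ln (card S) - 2 \<le> measure Q ?A * (ln (card S) + 1) - card S * measure P ?A - 1"
    using PA e by (simp add: algebra_simps)
  then have "((1 - e) * ln (card S) - 2) / ln 2
      \<le> (measure Q ?A * (ln (card S) + 1) - card S * measure P ?A - 1) / ln 2"
    by (simp add: divide_right_mono)
  also have "\<dots> \<le> KL_divergence 2 P Q"
  proof (rule KL_divergence_lower_bound[OF pP])
    show "emeasure Q E \<le> ennreal (real (card S)) * emeasure P E" if "E \<in> sets P" for E
      unfolding P_def Q_def
      using joint_law_le_card_product[OF M _ _ S dX, where E=E] that setsP by simp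
  qed (use n0 A setsP in \<open>simp_all add: Q_def\<close>)
  finally show ?thesis
    unfolding M.mutual_information_def P_def Q_def .
qed


section \<open>Decoding under additive noise\<close>

lemma finite_measure_norm_tail:
  fixes \<nu> :: "'c::real_normed_vector measure"
  assumes fin: "finite_measure \<nu>" and sets: "sets \<nu> = sets borel" and t: "t > 0"
  shows "\<exists>R. measure \<nu> {z. R \<le> norm z} < t"
proof -
  interpret finite_measure \<nu> by fact
  define T where "T m = {z :: 'c. real m \<le> norm z}" for m :: nat
  have Ts: "range T \<subseteq> sets \<nu>" unfolding T_def sets
    by (auto intro!: borel_closed closed_Collect_le continuous_intros)
  have dec: "decseq T" unfolding T_def decseq_def by auto
  have "(\<Inter>m. T m) = {}"
  proof (rule equals0I)
    fix z assume "z \<in> (\<Inter>m. T m)"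
    then have "real (nat \<lceil>norm z\<rceil> + 1) \<le> norm z" unfolding T_def by blast
    then show False by linarith
  qed
  then have "(\<lambda>m. measure \<nu> (T m)) \<longlonglongrightarrow> 0"
    using finite_Lim_measure_decseq[OF Ts dec] by simp
  then obtain m where "measure \<nu> (T m) < t"
    using t by (metis order_tendstoD(2) eventually_sequentially order_refl)
  then show ?thesis unfolding T_def by blast
qed

text \<open>
  A single radius R makes the noise tail small for every random variable with law \<nu>.
  (If \<nu> is not finite, no such random variable exists.)
\<close>
lemma noise_tail_bound:
  fixes \<nu> :: "'c::real_normed_vector measure"
  assumes sets: "sets \<nu> = sets borel" and t: "t > 0"
  shows "\<exists>R. \<forall>(M :: 'a measure) Z. prob_space M \<longrightarrow> Z \<in> borel_measurable M \<longrightarrow>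
      distr M borel Z = \<nu> \<longrightarrow> measure M {\<omega>\<in>space M. R \<le> norm (Z \<omega>)} < t"
proof (cases "finite_measure \<nu>")
  case True
  then obtain R where R: "measure \<nu> {z. R \<le> norm z} < t"
    using finite_measure_norm_tail[OF _ sets t] by blast
  show ?thesis
  proof (intro exI[of _ R] allI impI)
    fix M :: "'a measure" and Z
    assume "prob_space M" and [measurable]: "Z \<in> borel_measurable M" and dZ: "distr M borel Z = \<nu>"
    have "measure M {\<omega>\<in>space M. R \<le> norm (Z \<omega>)} = measure (distr M borel Z) {z. R \<le> norm z}"
      by (subst measure_distr) (auto simp: vimage_def Int_def conj_commute)
    then show "measure M {\<omega>\<in>space M. R \<le> norm (Z \<omega>)} < t" using R dZ by simp
  qed
next
  case False
  have "\<not> (prob_space M \<and> Z \<in> borel_measurable M \<and> distr M borel Z = \<nu>)" for M :: "'a measure" and Z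
    using False prob_space.prob_space_distr prob_space.finite_measure by blast
  then show ?thesis by blast
qed

lemma decoding_success:
  fixes X :: "'a \<Rightarrow> 'b::topological_space"
    and g :: "'b \<Rightarrow> 'c::{real_normed_vector, second_countable_topology}"
  assumes M: "prob_space M" and [measurable]: "X \<in> borel_measurable M" "Y \<in> borel_measurable M"
    "Z \<in> borel_measurable M" "g \<in> borel_measurable borel" "S \<in> sets borel"
    and XS: "AE \<omega> in M. X \<omega> \<in> S" and Y: "AE \<omega> in M. Y \<omega> = g (X \<omega>) + Z \<omega>"
  shows "1 - measure M {\<omega>\<in>space M. \<delta> \<le> norm (Z \<omega>)}
           \<le> measure M {\<omega>\<in>space M. X \<omega> \<in> S \<and> dist (g (X \<omega>)) (Y \<omega>) < \<delta>}"
proof -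
  interpret M: prob_space M by fact
  have "{\<omega>\<in>space M. norm (Z \<omega>) < \<delta>} = space M - {\<omega>\<in>space M. \<delta> \<le> norm (Z \<omega>)}"
    by auto
  then have "1 - measure M {\<omega>\<in>space M. \<delta> \<le> norm (Z \<omega>)} = measure M {\<omega>\<in>space M. norm (Z \<omega>) < \<delta>}"
    by (simp add: M.prob_compl)
  also have "\<dots> \<le> measure M {\<omega>\<in>space M. X \<omega> \<in> S \<and> dist (g (X \<omega>)) (Y \<omega>) < \<delta>}"
  proof (rule M.finite_measure_mono_AE)
    show "AE \<omega> in M. \<omega> \<in> {\<omega>\<in>space M. norm (Z \<omega>) < \<delta>}
        \<longrightarrow> \<omega> \<in> {\<omega>\<in>space M. X \<omega> \<in> S \<and> dist (g (X \<omega>)) (Y \<omega>) < \<delta>}"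
      using XS Y by eventually_elim (auto simp: dist_norm)
  qed measurable
  finally show ?thesis .
qed


text \<open>Sine is at least half its argument on [0, 1] (since cos \<ge> 1/2 there).\<close>
lemma sin_ge_half:
  fixes t :: real
  assumes "0 \<le> t" "t \<le> 1"
  shows "t / 2 \<le> sin t"
proof (cases "t = 0")
  case False
  then have t: "0 < t" using assms by simp
  obtain z where z: "0 < z" "z < t" "sin t - sin 0 = (t - 0) * cos z"
    using MVT2[of 0 t sin cos] t by (auto intro: DERIV_sin)
  have "cos (pi / 3) \<le> cos z"
    using z assms pi_gt3 by (intro cos_monotone_0_pi_le) auto
  then have "1 / 2 \<le> cos z" by (simp add: cos_60)
  then show ?thesis using z t mult_left_mono[of "1/2" "cos z" t] by simp
qed simp

lemma cis_chord_lower: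
  fixes a b :: real
  assumes "\<bar>a - b\<bar> \<le> 1"
  shows "\<bar>a - b\<bar> / 2 \<le> cmod (cis a - cis b)"
proof -
  have "cis a - cis b = cis b * (cis (a - b) - 1)"
    by (simp add: right_diff_distrib cis_mult)
  then have "cmod (cis a - cis b) = cmod (cis (a - b) - 1)" by (simp add: norm_mult)
  moreover have "\<bar>sin (a - b)\<bar> \<le> cmod (cis (a - b) - 1)"
    using abs_Im_le_cmod[of "cis (a - b) - 1"] by simp
  moreover have "\<bar>a - b\<bar> / 2 \<le> \<bar>sin (a - b)\<bar>"
    using sin_ge_half[of "a - b"] sin_ge_half[of "b - a"] assms
    by (cases "a \<ge> b") (auto simp: sin_minus[of "a - b", simplified])
  ultimately show ?thesis by linarith
qed


section \<open>The ring constellation\<close>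

definition self_phase :: "real \<Rightarrow> complex \<Rightarrow> complex" where
  "self_phase h x = x * cis (h * (cmod x)\<^sup>2)"

lemma self_phase_measurable [measurable]: "self_phase h \<in> borel_measurable borel"
  unfolding self_phase_def by (intro borel_measurable_continuous_onI continuous_intros)

definition ring_gap_factor :: "real \<Rightarrow> nat" where
  "ring_gap_factor p = nat \<lceil>ln p\<rceil> + 1"

text \<open>Ring gap r = sqrt(2 pi q s(p)); the squared ring radii are the multiples s(p) j^2 of 2 pi q.\<close>
definition ring_gap :: "real \<Rightarrow> real \<Rightarrow> real" where
  "ring_gap q p = sqrt (2 * pi * q * real (ring_gap_factor p))"

text \<open>Number J of rings, and of phases per ring; the outermost ring has radius below sqrt p.\<close>
definition ring_count :: "real \<Rightarrow> real \<Rightarrow> nat" where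
  "ring_count q p = nat \<lfloor>sqrt p / (2 * ring_gap q p)\<rfloor>"

definition const_point :: "real \<Rightarrow> real \<Rightarrow> nat \<times> nat \<Rightarrow> complex" where
  "const_point q p ji =
     complex_of_real (ring_gap q p * real (fst ji)) * cis (real (snd ji) / real (ring_count q p))"

definition const_index :: "real \<Rightarrow> real \<Rightarrow> (nat \<times> nat) set" where
  "const_index q p = {ring_count q p..<2 * ring_count q p} \<times> {..<ring_count q p}"

definition constellation :: "real \<Rightarrow> real \<Rightarrow> complex set" where
  "constellation q p = const_point q p ` const_index q p"

lemma ring_gap_pos: "q > 0 \<Longrightarrow> ring_gap q p > 0"
  by (simp add: ring_gap_def ring_gap_factor_def)

lemma ring_gap_sq: "q > 0 \<Longrightarrow> (ring_gap q p)\<^sup>2 = 2 * pi * q * real (ring_gap_factor p)"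
  by (simp add: ring_gap_def)

lemma cmod_const_point: "q > 0 \<Longrightarrow> cmod (const_point q p ji) = ring_gap q p * real (fst ji)"
  using ring_gap_pos[of q p] by (simp add: const_point_def norm_mult)

lemma finite_constellation: "finite (constellation q p)"
  by (simp add: constellation_def const_index_def)

lemma constellation_energy_lattice:
  assumes q: "q > 0" and x: "x \<in> constellation q p"
  shows "\<exists>m::nat. m \<ge> 1 \<and> (cmod x)\<^sup>2 = 2 * pi * q * real m"
proof -
  obtain j i where ji: "(j, i) \<in> const_index q p" "x = const_point q p (j, i)"
    using x by (auto simp: constellation_def)
  then have j: "j \<ge> 1" by (auto simp: const_index_def)
  have energy: "(cmod x)\<^sup>2 = 2 * pi * q * real (ring_gap_factor p * j\<^sup>2)"
    using ji cmod_const_point[OF q] ring_gap_sq[OF q] by (simp add: power_mult_distrib)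
  have "1 \<le> j\<^sup>2" using j by (simp add: one_le_power)
  then have "1 \<le> ring_gap_factor p * j\<^sup>2" by (simp add: ring_gap_factor_def trans_le_add1)
  with energy show ?thesis by blast
qed

lemma constellation_energy:
  assumes q: "q > 0" and p: "p \<ge> 0" and x: "x \<in> constellation q p"
  shows "(cmod x)\<^sup>2 \<le> p"
proof -
  let ?r = "ring_gap q p"
  obtain j i where ji: "(j, i) \<in> const_index q p" "x = const_point q p (j, i)"
    using x by (auto simp: constellation_def)
  have r: "?r > 0" by (rule ring_gap_pos[OF q])
  have J: "real (ring_count q p) \<le> sqrt p / (2 * ?r)"
    unfolding ring_count_def using r p by simp
  have "cmod x = ?r * real j" using ji cmod_const_point[OF q] by simp
  also have "\<dots> \<le> ?r * (2 * real (ring_count q p))"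
    using ji r by (intro mult_left_mono) (auto simp: const_index_def)
  also have "\<dots> \<le> ?r * (2 * (sqrt p / (2 * ?r)))" using J r by (intro mult_left_mono) auto
  also have "\<dots> = sqrt p" using r by simp
  finally have "(cmod x)\<^sup>2 \<le> (sqrt p)\<^sup>2" by (intro power_mono) auto
  then show ?thesis using p by simp
qed

text \<open>
  After any self-phase rotation the constellation stays r/2-separated: points on different
  rings differ in modulus by at least r, and on a common ring j \<ge> J their phases differ by
  at least 1/J, giving a chord of length at least r j / (2J) \<ge> r/2.
\<close>
lemma constellation_separated:
  assumes q: "q > 0" and a: "a \<in> const_index q p" and b: "b \<in> const_index q p" and ab: "a \<noteq> b"
  shows "ring_gap q p / 2 \<le> dist (self_phase h (const_point q p a)) (self_phase h (const_point q p b))"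
proof -
  obtain j i j' i' where ab': "a = (j, i)" "b = (j', i')" by (cases a, cases b)
  let ?J = "ring_count q p" and ?r = "ring_gap q p"
  let ?gx = "self_phase h (const_point q p a)" and ?gy = "self_phase h (const_point q p b)"
  have r: "?r > 0" by (rule ring_gap_pos[OF q])
  have jr: "?J \<le> j" "i < ?J" "i' < ?J" using a b ab' by (auto simp: const_index_def)
  show ?thesis
  proof (cases "j = j'")
    case False
    have moduli: "cmod ?gx = ?r * real j" "cmod ?gy = ?r * real j'"
      using cmod_const_point[OF q] ab' by (simp_all add: self_phase_def norm_mult)
    have "?r * 1 \<le> ?r * \<bar>real j - real j'\<bar>"
      using False r by (intro mult_left_mono) auto
    also have "\<dots> = \<bar>cmod ?gx - cmod ?gy\<bar>"
      by (simp add: moduli right_diff_distrib[symmetric] abs_mult abs_of_pos[OF r])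
    also have "\<dots> \<le> cmod (?gx - ?gy)" by (rule norm_triangle_ineq3)
    finally show ?thesis using r by (simp add: dist_norm)
  next
    case True
    then have ii: "i \<noteq> i'" using ab ab' by auto
    have J1: "?J \<ge> 1" using jr by simp
    define d where "d = cmod (cis (real i / real ?J) - cis (real i' / real ?J))"
    have "?gx - ?gy = (const_point q p a - const_point q p b) * cis (h * (cmod (const_point q p a))\<^sup>2)"
      using cmod_const_point[OF q] ab' True by (simp add: self_phase_def algebra_simps)
    also have "const_point q p a - const_point q p b
        = complex_of_real (?r * real j) * (cis (real i / real ?J) - cis (real i' / real ?J))"
      using ab' True by (simp add: const_point_def algebra_simps)
    finally have dist: "dist ?gx ?gy = ?r * real j * d"
      using r by (simp add: dist_norm norm_mult d_def)
    have diff: "\<bar>real i / real ?J - real i' / real ?J\<bar> = \<bar>real i - real i'\<bar> / real ?J"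
      by (simp add: diff_divide_distrib[symmetric])
    have "1 / real ?J / 2 \<le> \<bar>real i - real i'\<bar> / real ?J / 2"
      using ii J1 by (intro divide_right_mono) auto
    also have "\<dots> \<le> d"
      unfolding d_def diff[symmetric] using jr J1 diff
      by (intro cis_chord_lower) (simp add: divide_le_eq_1)
    finally have "1 / (2 * real ?J) \<le> d" by simp
    then have "?r * real ?J * (1 / (2 * real ?J)) \<le> ?r * real j * d"
      using r jr J1 by (intro mult_mono) auto
    then show ?thesis using dist J1 by simp
  qed
qed

text \<open>Distinct indices give distinct points (separation with h = 0), so |S| = J^2.\<close>
lemma constellation_card: "q > 0 \<Longrightarrow> card (constellation q p) = ring_count q p * ring_count q p"
proof -
  assume q: "q > 0"
  have "inj_on (const_point q p) (const_index q p)"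
  proof (rule inj_onI, rule ccontr)
    fix a b assume "a \<in> const_index q p" "b \<in> const_index q p" "const_point q p a = const_point q p b" "a \<noteq> b"
    with constellation_separated[OF q, of a p b 0] ring_gap_pos[OF q, of p] show False by simp
  qed
  then show ?thesis
    by (simp add: constellation_def card_image const_index_def card_cartesian_product)
qed

lemma admissible_constellation_input:
  assumes q: "q > 0" and p: "p \<ge> 0" and ne: "constellation q p \<noteq> {}"
  shows "admissible_input q p (uniform_law (constellation q p))"
proof -
  let ?S = "constellation q p" and ?\<mu> = "uniform_law (constellation q p)"
  have AE: "AE x in ?\<mu>. x \<in> ?S"
    by (rule uniform_law_AE_mem[OF finite_constellation ne])
  have "(\<integral>\<^sup>+ x. ennreal ((cmod x)\<^sup>2) \<partial>?\<mu>) \<le> (\<integral>\<^sup>+ x. ennreal p \<partial>?\<mu>)"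
    using AE by (intro nn_integral_mono_AE) (auto elim!: eventually_mono intro!: ennreal_leI constellation_energy[OF q p])
  also have "\<dots> = ennreal p"
    by (simp add: prob_space.emeasure_space_1[OF prob_space_uniform_law])
  moreover have "AE x in ?\<mu>. \<exists>m::nat. m \<ge> 1 \<and> (cmod x)\<^sup>2 = 2 * pi * q * real m"
    using AE by (rule eventually_mono) (rule constellation_energy_lattice[OF q])
  ultimately show ?thesis
    unfolding admissible_input_def using prob_space_uniform_law by simp
qed


lemma ring_gap_lower:
  assumes q: "q > 0"
  shows "sqrt (2 * pi * q * ln p) \<le> ring_gap q p"
  unfolding ring_gap_def using q
  by (intro real_sqrt_le_mono mult_left_mono) (auto simp: ring_gap_factor_def, linarith)

lemma ring_gap_upper:
  assumes q: "q > 0" and p: "p \<ge> 1"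
  shows "ring_gap q p \<le> sqrt (2 * pi * q * (ln p + 2))"
proof -
  have "real (ring_gap_factor p) \<le> ln p + 2"
    using ln_ge_zero[OF p] by (simp add: ring_gap_factor_def) linarith
  then show ?thesis
    unfolding ring_gap_def using q by (intro real_sqrt_le_mono mult_left_mono) auto
qed

text \<open>Once sqrt p \<ge> 4 r, the constellation has at least p / (16 r^2) \<ge> p / (32 pi q (ln p + 2)) points.\<close>
lemma constellation_card_lower:
  assumes q: "q > 0" and p: "p \<ge> 1" and big: "4 * sqrt (2 * pi * q * (ln p + 2)) \<le> sqrt p"
  shows "p / (32 * pi * q * (ln p + 2)) \<le> card (constellation q p)"
proof -
  let ?r = "ring_gap q p" and ?J = "ring_count q p"
  have r: "?r > 0" by (rule ring_gap_pos[OF q])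
  have rup: "?r \<le> sqrt (2 * pi * q * (ln p + 2))" by (rule ring_gap_upper[OF q p])
  have lnp: "0 < ln p + 2" using ln_ge_zero[OF p] by linarith
  have one: "1 \<le> sqrt p / (4 * ?r)" using big rup r by (simp add: pos_le_divide_eq)
  have "sqrt p / (2 * ?r) - 1 \<le> real ?J" unfolding ring_count_def by linarith
  moreover have "sqrt p / (2 * ?r) = 2 * (sqrt p / (4 * ?r))" by simp
  ultimately have J: "sqrt p / (4 * ?r) \<le> real ?J" using one by linarith
  have "p / (32 * pi * q * (ln p + 2)) \<le> p / (16 * ?r\<^sup>2)"
  proof (rule divide_left_mono)
    have "?r\<^sup>2 \<le> (sqrt (2 * pi * q * (ln p + 2)))\<^sup>2" using rup r by (intro power_mono) auto
    then show "16 * ?r\<^sup>2 \<le> 32 * pi * q * (ln p + 2)" using q ln_ge_zero[OF p] by simp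
  qed (use p r q lnp in \<open>auto intro!: mult_pos_pos\<close>)
  also have "\<dots> = (sqrt p / (4 * ?r))\<^sup>2" using p by (simp add: power_divide power_mult_distrib)
  also have "\<dots> \<le> (real ?J)\<^sup>2" using J one by (intro power_mono) auto
  also have "\<dots> = card (constellation q p)" by (simp add: constellation_card[OF q] power2_eq_square)
  finally show ?thesis .
qed

lemma constellation_card_lower_eventually:
  assumes q: "q > 0"
  shows "eventually (\<lambda>p. p / (32 * pi * q * (ln p + 2)) \<le> card (constellation q p)) at_top"
proof -
  have "eventually (\<lambda>p. 4 * sqrt (2 * pi * q * (ln p + 2)) \<le> sqrt p) at_top"
    using q by real_asymp
  with eventually_ge_at_top[of 1] show ?thesis
    by eventually_elim (rule constellation_card_lower[OF q])
qed

lemma constellation_nonempty_eventually: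
  assumes q: "q > 0"
  shows "eventually (\<lambda>p. constellation q p \<noteq> {}) at_top"
proof -
  have "eventually (\<lambda>p. 1 \<le> p / (32 * pi * q * (ln p + 2))) at_top"
    using q by real_asymp
  with constellation_card_lower_eventually[OF q] show ?thesis
    by eventually_elim auto
qed

text \<open>The constellation carries ln p - O(ln ln p) nats, enough for any rate factor below 1.\<close>
lemma constellation_rate_eventually:
  assumes q: "q > 0" and N: "N > 0" and e: "0 < e" "e < 1"
  shows "eventually (\<lambda>p. (1 - e) * ln (p / N) \<le> (1 - e / 2) * ln (card (constellation q p)) - 2) at_top"
proof -
  have "eventually (\<lambda>p. (1 - e) * ln (p / N)
          \<le> (1 - e / 2) * ln (p / (32 * pi * q * (ln p + 2))) - 2) at_top"
    using q N e by real_asymp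
  moreover have "eventually (\<lambda>p. 0 < p / (32 * pi * q * (ln p + 2))) at_top"
    using q by real_asymp
  ultimately show ?thesis
    using constellation_card_lower_eventually[OF q]
  proof eventually_elim
    case (elim p)
    then have "ln (p / (32 * pi * q * (ln p + 2))) \<le> ln (card (constellation q p))" by simp
    then have "(1 - e / 2) * ln (p / (32 * pi * q * (ln p + 2)))
        \<le> (1 - e / 2) * ln (card (constellation q p))"
      using e by (intro mult_left_mono) auto
    then show ?case using elim(1) by linarith
  qed
qed

lemma ring_gap_eventually_ge:
  assumes q: "q > 0"
  shows "eventually (\<lambda>p. R \<le> ring_gap q p) at_top"
proof -
  have "eventually (\<lambda>p. R \<le> sqrt (2 * pi * q * ln p)) at_top"
    using q by real_asymp
  then show ?thesis by eventually_elim (use ring_gap_lower[OF q] order_trans in blast)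
qed


section \<open>Pre-log 1 on a single-user channel with self-phase modulation\<close>

lemma constellation_information_bound:
  fixes X Y Z :: "'a \<Rightarrow> complex"
  assumes q: "q > 0" and M: "prob_space M"
    and [measurable]: "X \<in> borel_measurable M" "Y \<in> borel_measurable M" "Z \<in> borel_measurable M"
    and ne: "constellation q p \<noteq> {}" and dX: "distr M borel X = uniform_law (constellation q p)"
    and Y: "AE \<omega> in M. Y \<omega> = self_phase h (X \<omega>) + Z \<omega>"
    and tail: "measure M {\<omega>\<in>space M. ring_gap q p / 4 \<le> norm (Z \<omega>)} \<le> t" and t: "t \<le> 1"
  shows "((1 - t) * ln (card (constellation q p)) - 2) / ln 2
           \<le> prob_space.mutual_information M 2 borel borel X Y"
proof -
  let ?S = "constellation q p" and ?\<delta> = "ring_gap q p / 4"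
  have S: "finite ?S" "?S \<noteq> {}" using finite_constellation ne by auto
  have [measurable]: "?S \<in> sets borel" using S by (intro borel_closed finite_imp_closed)
  have XS: "AE \<omega> in M. X \<omega> \<in> ?S" by (rule AE_mem_of_uniform_law[OF _ dX S]) simp
  have good: "1 - t \<le> measure M {\<omega>\<in>space M. X \<omega> \<in> ?S \<and> dist (self_phase h (X \<omega>)) (Y \<omega>) < ?\<delta>}"
    using decoding_success[OF M _ _ _ _ _ XS Y, of ?\<delta>] tail by simp
  have sep: "2 * ?\<delta> \<le> dist (self_phase h s) (self_phase h s')"
    if "s \<in> ?S" "s' \<in> ?S" "s \<noteq> s'" for s s'
    using that constellation_separated[OF q, of _ p _ h] by (auto simp: constellation_def)
  show ?thesis
    by (rule mutual_information_lower_bound[OF M _ _ S dX sep good]) (use t in simp_all)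
qed

lemma prelog_ratio_bound:
  fixes I c e \<epsilon> p N :: real
  assumes N: "0 < N" "N < p" and e: "e \<le> \<epsilon>"
    and nats: "(1 - e) * ln (p / N) \<le> c" and I: "c / ln 2 \<le> I"
  shows "1 - \<epsilon> \<le> I / log 2 (p / N)"
proof -
  have lpos: "0 < log 2 (p / N)" using N by simp
  have "(1 - \<epsilon>) * log 2 (p / N) \<le> (1 - e) * log 2 (p / N)"
    using lpos e by (intro mult_right_mono) auto
  also have "\<dots> = (1 - e) * ln (p / N) / ln 2" by (simp add: log_def)
  also have "\<dots> \<le> c / ln 2" using nats by (simp add: divide_right_mono)
  also have "\<dots> \<le> I" by (rule I)
  finally show ?thesis using lpos by (simp add: pos_le_divide_eq)
qed

text \<open>
  Fix the slack e = min \<epsilon> 1/2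
  and a radius R beyond which the noise has mass below e/2; for large p the ring gap exceeds 4R.
\<close>
theorem single_user_prelog:
  fixes q h N \<epsilon> :: real and \<nu> :: "complex measure"
  assumes q: "q > 0" and N: "N > 0" and \<epsilon>: "\<epsilon> > 0" and sets_nu: "sets \<nu> = sets borel"
  shows "eventually (\<lambda>p. admissible_input q p (uniform_law (constellation q p)) \<and>
      (\<forall>(M :: 'a measure) X Y Z. prob_space M \<longrightarrow>
        X \<in> borel_measurable M \<longrightarrow> Y \<in> borel_measurable M \<longrightarrow> Z \<in> borel_measurable M \<longrightarrow>
        distr M borel X = uniform_law (constellation q p) \<longrightarrow> distr M borel Z = \<nu> \<longrightarrow>
        (AE \<omega> in M. Y \<omega> = self_phase h (X \<omega>) + Z \<omega>) \<longrightarrow>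
        1 - \<epsilon> \<le> prob_space.mutual_information M 2 borel borel X Y / log 2 (p / N))) at_top"
proof -
  define e where "e = min \<epsilon> (1/2)"
  have e: "0 < e" "e < 1" "e \<le> \<epsilon>" using \<epsilon> by (auto simp: e_def)
  have "0 < e / 2" using e by simp
  obtain R where R: "\<forall>(M :: 'a measure) Z. prob_space M \<longrightarrow> Z \<in> borel_measurable M \<longrightarrow>
      distr M borel Z = \<nu> \<longrightarrow> measure M {\<omega>\<in>space M. R \<le> norm (Z \<omega>)} < e / 2"
    using noise_tail_bound[OF sets_nu \<open>0 < e / 2\<close>] by blast
  show ?thesis
    using constellation_rate_eventually[OF q N e(1,2)] ring_gap_eventually_ge[OF q, of "4 * R"]
      constellation_nonempty_eventually[OF q] eventually_gt_at_top[of N]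
  proof (eventually_elim, intro conjI allI impI)
    case (elim p)
    show "admissible_input q p (uniform_law (constellation q p))"
      using elim(3,4) N by (intro admissible_constellation_input[OF q]) auto
    fix M :: "'a measure" and X Y Z
    assume M: "prob_space M" and [measurable]: "X \<in> borel_measurable M" "Y \<in> borel_measurable M"
      "Z \<in> borel_measurable M" and dX: "distr M borel X = uniform_law (constellation q p)"
      and dZ: "distr M borel Z = \<nu>" and Y: "AE \<omega> in M. Y \<omega> = self_phase h (X \<omega>) + Z \<omega>"
    interpret M: prob_space M by fact
    have "measure M {\<omega>\<in>space M. ring_gap q p / 4 \<le> norm (Z \<omega>)} \<le> measure M {\<omega>\<in>space M. R \<le> norm (Z \<omega>)}"
      using elim(2) by (intro M.finite_measure_mono) auto
    then have tail: "measure M {\<omega>\<in>space M. ring_gap q p / 4 \<le> norm (Z \<omega>)} \<le> e / 2"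
      using R[rule_format, OF M _ dZ] by simp
    have "((1 - e / 2) * ln (card (constellation q p)) - 2) / ln 2 \<le> M.mutual_information 2 borel borel X Y"
      by (rule constellation_information_bound[OF q M _ _ _ elim(3) dX Y tail]) (use e in simp_all)
    then show "1 - \<epsilon> \<le> M.mutual_information 2 borel borel X Y / log 2 (p / N)"
      by (rule prelog_ratio_bound[OF N elim(4) e(3) elim(1)])
  qed
qed


section \<open>Reduction of the K-user channel\<close>

text \<open>
  If every |x_l|^2 (l \<noteq> k) is a multiple of 2 pi q_l and every h_kl q_l is an integer, the cross
  terms are multiples of 2 pi and drop out of the phase of user k.
\<close>
lemma interference_cancels:
  fixes K k :: nat and hk q :: "nat \<Rightarrow> real" and x :: "nat \<Rightarrow> complex"
  assumes k: "k < K"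
    and ints: "\<And>l. l < K \<Longrightarrow> l \<noteq> k \<Longrightarrow> hk l * q l \<in> \<int>"
    and lattice: "\<And>l. l < K \<Longrightarrow> \<exists>m::nat. m \<ge> 1 \<and> (cmod (x l))\<^sup>2 = 2 * pi * q l * real m"
  shows "cis (\<Sum>l<K. hk l * (cmod (x l))\<^sup>2) = cis (hk k * (cmod (x k))\<^sup>2)"
proof -
  define t where "t l = hk l * (cmod (x l))\<^sup>2 / (2 * pi)" for l
  have "t l \<in> \<int>" if l: "l \<in> {..<K} - {k}" for l
  proof -
    obtain m :: nat where m: "(cmod (x l))\<^sup>2 = 2 * pi * q l * real m"
      using lattice[of l] l by auto
    have "t l = (hk l * q l) * real m" unfolding t_def m by (simp add: field_simps)
    then show ?thesis using ints l by simp
  qed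
  then have "cis (2 * pi * (\<Sum>l\<in>{..<K} - {k}. t l)) = 1"
    by (intro cis_multiple_2pi Ints_sum)
  moreover have "(\<Sum>l<K. hk l * (cmod (x l))\<^sup>2) = hk k * (cmod (x k))\<^sup>2 + 2 * pi * (\<Sum>l\<in>{..<K} - {k}. t l)"
    using k by (subst sum.remove[of _ k]) (auto simp: t_def sum_distrib_left)
  ultimately show ?thesis by (simp add: cis_mult[symmetric])
qed

definition noise_law :: "real \<Rightarrow> complex measure" where
  "noise_law N = density lborel (\<lambda>z. ennreal (cscg_density N z))"

lemma channel_setup_noise:
  assumes "channel_setup M K N \<mu> P X Z" "k < K"
  shows "Z k \<in> borel_measurable M" "distr M borel (Z k) = noise_law N"
proof -
  have dZ: "distributed M lborel (Z k) (\<lambda>z. ennreal (cscg_density N z))"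
    using assms by (simp add: channel_setup_def)
  then show "Z k \<in> borel_measurable M" by (simp add: distributed_def)
  have "distr M borel (Z k) = distr M lborel (Z k)" by (rule distr_cong) auto
  then show "distr M borel (Z k) = noise_law N"
    using dZ by (simp add: distributed_def noise_law_def)
qed

lemma channel_out_measurable:
  assumes "channel_setup M K N \<mu> P X Z" "k < K"
  shows "channel_out K h X Z k \<in> borel_measurable M"
proof -
  have [measurable]: "X l \<in> borel_measurable M" if "l < K" for l
    using assms that by (simp add: channel_setup_def)
  have [measurable]: "Z k \<in> borel_measurable M" by (rule channel_setup_noise[OF assms])
  have [measurable]: "cis \<in> borel_measurable borel"
    by (intro borel_measurable_continuous_onI continuous_intros)
  show ?thesis unfolding channel_out_def using assms(2) by measurable
qed

lemma channel_out_single_user: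
  assumes chan: "channel_setup M K N \<mu> P X Z" and k: "k < K"
    and lattice: "\<And>l. l < K \<Longrightarrow> AE x in \<mu> l (P l). \<exists>m::nat. m \<ge> 1 \<and> (cmod x)\<^sup>2 = 2 * pi * q l * real m"
    and ints: "\<And>l. l < K \<Longrightarrow> l \<noteq> k \<Longrightarrow> h k l * q l \<in> \<int>"
  shows "AE \<omega> in M. channel_out K h X Z k \<omega> = self_phase (h k k) (X k \<omega>) + Z k \<omega>"
proof -
  have "AE \<omega> in M. \<forall>l\<in>{..<K}. \<exists>m::nat. m \<ge> 1 \<and> (cmod (X l \<omega>))\<^sup>2 = 2 * pi * q l * real m"
  proof (rule AE_finite_allI)
    fix l assume "l \<in> {..<K}"
    then have Xl: "X l \<in> borel_measurable M" "distr M borel (X l) = \<mu> l (P l)"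
      using chan by (auto simp: channel_setup_def)
    have "AE x in distr M borel (X l). \<exists>m::nat. m \<ge> 1 \<and> (cmod x)\<^sup>2 = 2 * pi * q l * real m"
      unfolding Xl(2) using lattice \<open>l \<in> {..<K}\<close> by simp
    then show "AE \<omega> in M. \<exists>m::nat. m \<ge> 1 \<and> (cmod (X l \<omega>))\<^sup>2 = 2 * pi * q l * real m"
      by (rule AE_distrD[OF Xl(1)])
  qed simp
  then show ?thesis
    by eventually_elim
       (simp add: channel_out_def self_phase_def interference_cancels[OF k, of "h k" q] ints)
qed

lemma channel_user_rate:
  fixes M :: "'a measure" and \<Phi> :: "real \<Rightarrow> bool"
  assumes chan: "channel_setup M K N \<mu> P X Z" and k: "k < K"
    and lattice: "\<And>l. l < K \<Longrightarrow> AE x in \<mu> l (P l). \<exists>m::nat. m \<ge> 1 \<and> (cmod x)\<^sup>2 = 2 * pi * q l * real m"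
    and ints: "\<And>l. l < K \<Longrightarrow> l \<noteq> k \<Longrightarrow> h k l * q l \<in> \<int>"
    and single: "\<forall>(M' :: 'a measure) X' Y Z'. prob_space M' \<longrightarrow>
        X' \<in> borel_measurable M' \<longrightarrow> Y \<in> borel_measurable M' \<longrightarrow> Z' \<in> borel_measurable M' \<longrightarrow>
        distr M' borel X' = \<mu> k (P k) \<longrightarrow> distr M' borel Z' = noise_law N \<longrightarrow>
        (AE \<omega> in M'. Y \<omega> = self_phase (h k k) (X' \<omega>) + Z' \<omega>) \<longrightarrow>
        \<Phi> (prob_space.mutual_information M' 2 borel borel X' Y)"
  shows "\<Phi> (prob_space.mutual_information M 2 borel borel (X k) (channel_out K h X Z k))"
proof -
  have inputs: "prob_space M" "X k \<in> borel_measurable M" "distr M borel (X k) = \<mu> k (P k)"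
    using chan k by (simp_all add: channel_setup_def)
  have Y: "AE \<omega> in M. channel_out K h X Z k \<omega> = self_phase (h k k) (X k \<omega>) + Z k \<omega>"
    using chan k lattice ints by (rule channel_out_single_user)
  show ?thesis
    by (rule single[rule_format, OF inputs(1,2) channel_out_measurable[OF chan k]
          channel_setup_noise(1)[OF chan k] inputs(3) channel_setup_noise(2)[OF chan k] Y])
qed

lemma eventually_powers_to_infty:
  assumes "\<And>l. l < K \<Longrightarrow> eventually (Q l) at_top"
  shows "eventually (\<lambda>P. \<forall>l<K. Q l (P l)) (powers_to_infty K)"
proof -
  have "\<forall>l<K. \<exists>B. \<forall>p\<ge>B. Q l p" using assms by (simp add: eventually_at_top_linorder)
  then obtain B where B: "\<And>l p. l < K \<Longrightarrow> B l \<le> p \<Longrightarrow> Q l p" by metis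
  let ?B = "MAX l\<in>{..<K}. B l"
  have "eventually (\<lambda>P. \<forall>l<K. Q l (P l)) (principal {P. \<forall>l<K. ?B \<le> P l})"
    unfolding eventually_principal
  proof (intro ballI allI impI)
    fix P l assume P: "P \<in> {P. \<forall>l<K. ?B \<le> P l}" and l: "l < K"
    have "B l \<le> ?B" using l by (intro Max_ge) auto
    moreover have "?B \<le> P l" using P l by simp
    ultimately have "B l \<le> P l" by (rule order_trans)
    then show "Q l (P l)" using B l by blast
  qed
  then show ?thesis
    unfolding powers_to_infty_def by (rule eventually_INF1[OF UNIV_I])
qed


theorem prelog_from_single_users:
  fixes \<mu> :: "nat \<Rightarrow> real \<Rightarrow> complex measure"
  assumes ints: "\<forall>k<K. \<forall>l<K. k \<noteq> l \<longrightarrow> h k l * q l \<in> \<int>"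
    and user: "\<And>l. l < K \<Longrightarrow> eventually (\<lambda>p. admissible_input (q l) p (\<mu> l p) \<and>
      (\<forall>(M :: 'a measure) X Y Z. prob_space M \<longrightarrow>
        X \<in> borel_measurable M \<longrightarrow> Y \<in> borel_measurable M \<longrightarrow> Z \<in> borel_measurable M \<longrightarrow>
        distr M borel X = \<mu> l p \<longrightarrow> distr M borel Z = noise_law N \<longrightarrow>
        (AE \<omega> in M. Y \<omega> = self_phase (h l l) (X \<omega>) + Z \<omega>) \<longrightarrow>
        1 - \<epsilon> \<le> prob_space.mutual_information M 2 borel borel X Y / log 2 (p / N))) at_top"
  shows "eventually (\<lambda>P. (\<forall>l<K. admissible_input (q l) (P l) (\<mu> l (P l))) \<and>
      (\<forall>(M :: 'a measure) X Z. channel_setup M K N \<mu> P X Z \<longrightarrow> (\<forall>k<K. 1 - \<epsilon> \<le>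
        prob_space.mutual_information M 2 borel borel (X k) (channel_out K h X Z k) / log 2 (P k / N))))
    (powers_to_infty K)"
proof -
  define good where "good l p \<longleftrightarrow> admissible_input (q l) p (\<mu> l p) \<and>
      (\<forall>(M :: 'a measure) X Y Z. prob_space M \<longrightarrow>
        X \<in> borel_measurable M \<longrightarrow> Y \<in> borel_measurable M \<longrightarrow> Z \<in> borel_measurable M \<longrightarrow>
        distr M borel X = \<mu> l p \<longrightarrow> distr M borel Z = noise_law N \<longrightarrow>
        (AE \<omega> in M. Y \<omega> = self_phase (h l l) (X \<omega>) + Z \<omega>) \<longrightarrow>
        1 - \<epsilon> \<le> prob_space.mutual_information M 2 borel borel X Y / log 2 (p / N))" for l p
  have "eventually (good l) at_top" if "l < K" for l
    unfolding good_def by (rule user[OF that])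
  then have "eventually (\<lambda>P. \<forall>l<K. good l (P l)) (powers_to_infty K)"
    by (rule eventually_powers_to_infty)
  then show ?thesis
  proof (eventually_elim, intro conjI allI impI)
    case (elim P)
    then show "admissible_input (q l) (P l) (\<mu> l (P l))" if "l < K" for l
      using that by (simp add: good_def)
    fix M :: "'a measure" and X Z k
    assume chan: "channel_setup M K N \<mu> P X Z" and k: "k < K"
    show "1 - \<epsilon> \<le> prob_space.mutual_information M 2 borel borel (X k) (channel_out K h X Z k) / log 2 (P k / N)"
    proof (rule channel_user_rate[OF chan k, where \<Phi>="\<lambda>I. 1 - \<epsilon> \<le> I / log 2 (P k / N)"])
      show "AE x in \<mu> l (P l). \<exists>m::nat. m \<ge> 1 \<and> (cmod x)\<^sup>2 = 2 * pi * q l * real m" if "l < K" for l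
        using elim that by (simp add: good_def admissible_input_def)
      show "h k l * q l \<in> \<int>" if "l < K" "l \<noteq> k" for l using ints k that by blast
    qed (use elim k in \<open>simp add: good_def\<close>)
  qed
qed


theorem mainTheorem6:
  fixes K :: nat and h :: "nat \<Rightarrow> nat \<Rightarrow> real" and q :: "nat \<Rightarrow> real" and N :: real
  assumes "K \<ge> 1"
    and "N > 0"
    and "\<forall>k<K. \<forall>l<K. k \<noteq> l \<longrightarrow> h k l \<in> \<rat>"
    and "\<forall>l<K. q l > 0"
    and "\<forall>k<K. \<forall>l<K. k \<noteq> l \<longrightarrow> h k l * q l \<in> \<int>"
  shows "\<exists>\<mu> :: nat \<Rightarrow> real \<Rightarrow> complex measure.
           \<forall>\<epsilon>>0. eventually (\<lambda>P.
              (\<forall>l<K. admissible_input (q l) (P l) (\<mu> l (P l))) \<and>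
              (\<forall>(M :: 'a measure) X Z. channel_setup M K N \<mu> P X Z \<longrightarrow>
                 (\<forall>k<K. 1 - \<epsilon> \<le>
                    prob_space.mutual_information M 2 borel borel (X k) (channel_out K h X Z k)
                      / log 2 (P k / N))))
             (powers_to_infty K)"
proof -
  let ?\<mu> = "\<lambda>l p. uniform_law (constellation (q l) p)"
  have q: "\<And>l. l < K \<Longrightarrow> q l > 0" using assms(4) by blast
  have sets_noise: "sets (noise_law N) = sets borel" by (simp add: noise_law_def)
  show ?thesis
    by (intro exI[of _ ?\<mu>] allI impI prelog_from_single_users[where \<mu> = ?\<mu>, OF assms(5)]
          single_user_prelog[OF q assms(2) _ sets_noise])
qed

end
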